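(* Let $F$ be an $N=(2,2)$ full vertex operator superalgebra with $c,\bar c\ne0$ and $d=G^+_{-1/2}+\bar G^+_{-1/2}$. Let $r,s\in\mathbb R$ and let $v=\sum_{(p,q)}v_{(p,q)}$ be a nonzero finite sum with $v_{(p,q)}\in F^{(p,q)}_{r+\frac p2,\,s+\frac q2}$. If $dv=0$ and $(r,s)\ne(0,0)$, then $v\in\mathrm{Im}\,d$.
   Context: A full vertex operator superalgebra is $F=\bigoplus_{(h,\bar h)\in\mathbb R^2}F_{h,\bar h}$ with $F_{0,0}=\mathbb C\mathbf 1$, $F_{h,\bar h}=0$ unless $h-\bar h\in\frac12\mathbb Z$, $\sum_{h+\bar h<K}\dim F_{h,\bar h}<\infty$, bounded below bigrading; parity $|a|=2(h-\bar h)\bmod 2$; even full vertex operator $Y(a,\underline z)=\sum_{r,s\in\mathbb R}a(r,s)z^{-r-1}\bar z^{-s-1}$ with vacuum $\mathbf 1$ satisfying Moriwaki's axioms (vacuum axioms; matrix coefficients of $Y(a,\underline z_1)Y(b,\underline z_2)c$, $Y(Y(a,\underline z_1-\underline z_2)b,\underline z_2)c$, $(-1)^{|a||b|}Y(b,\underline z_2)Y(a,\underline z_1)c$ converge in the respective domains to one real-analytic function on $\{z_1\ne z_2,z_1z_2\ne0\}$); conformal vectors $\omega\in F_{2,0},\bar\omega\in F_{0,2}$ with commuting Virasoro modes $L(n)=\omega(n+1,-1)$, $\bar L(n)=\bar\omega(-1,n+1)$ of central charges $c,\bar c$, $L(0),\bar L(0)$ acting on $F_{h,\bar h}$ by $h,\bar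 h$. An $N=(2,2)$ structure: holomorphic $\tau^\pm\in F_{3/2,0}$, $J\in F_{1,0}$ and antiholomorphic $\bar\tau^\pm\in F_{0,3/2},\bar J\in F_{0,1}$ with modes $G^\pm_r,J_n$ and $\bar G^\pm_r,\bar J_n$ ($Y(\tau^\pm,\underline z)=\sum_{r\in\frac12+\mathbb Z}G^\pm_rz^{-r-3/2}$, $Y(J,\underline z)=\sum J_nz^{-n-1}$, barred in $\bar z$) satisfying two supercommuting copies of the $N=2$ Neveu–Schwarz relations ($[J_m,J_n]=\frac c3m\delta_{m+n,0}$, $[J_m,G^\pm_r]=\pm G^\pm_{m+r}$, $[L_m,G^\pm_r]=(\frac m2-r)G^\pm_{m+r}$, $[L_m,J_n]=-nJ_{m+n}$, $[G^\pm_r,G^\pm_s]_+=0$, $[G^+_r,G^-_s]_+=L_{r+s}+\frac12(r-s)J_{r+s}+\frac c6(r^2-\frac14)\delta_{r+s,0}$; barred with $\bar c$), $J_0,\bar J_0$ semisimple with real eigenvalues, $J_0-\bar J_0$ integral and $\exp(\pi i(J_0-\bar J_0))$ the parity operator. $F^{(p,q)}_{h,\bar h}=\{v\in F_{h,\bar h}:J_0v=pv,\ \bar J_0v=qv\}$. *)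

theory Defs
  imports "HOL-Analysis.Analysis"
begin

class cvs = ab_group_add +
  fixes cscale :: "complex \<Rightarrow> 'a \<Rightarrow> 'a"  (infixr \<open>*\<^sub>C\<close> 75)
  assumes cscale_add_right: "a *\<^sub>C (x + y) = a *\<^sub>C x + a *\<^sub>C y"
      and cscale_add_left: "(a + b) *\<^sub>C x = a *\<^sub>C x + b *\<^sub>C x"
      and cscale_cscale: "a *\<^sub>C (b *\<^sub>C x) = (a * b) *\<^sub>C x"
      and cscale_one: "1 *\<^sub>C x = x"

definition clin :: "('a::cvs \<Rightarrow> 'b::cvs) \<Rightarrow> bool" where
  "clin f \<longleftrightarrow> (\<forall>x y. f (x + y) = f x + f y) \<and> (\<forall>a x. f (a *\<^sub>C x) = a *\<^sub>C f x)"

definition csubspace :: "'a::cvs set \<Rightarrow> bool" where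
  "csubspace S \<longleftrightarrow> 0 \<in> S \<and> (\<forall>x\<in>S. \<forall>y\<in>S. x + y \<in> S) \<and> (\<forall>a. \<forall>x\<in>S. a *\<^sub>C x \<in> S)"

definition cfin_dim :: "'a::cvs set \<Rightarrow> bool" where
  "cfin_dim S \<longleftrightarrow> (\<exists>B. finite B \<and> B \<subseteq> S \<and> (\<forall>x\<in>S. \<exists>f. x = (\<Sum>b\<in>B. f b *\<^sub>C b)))"

text \<open>Fh h hb is the homogeneous subspace F_{h,hb}; F is their direct sum.\<close>

definition bigraded :: "(real \<Rightarrow> real \<Rightarrow> 'v::cvs set) \<Rightarrow> bool" where
  "bigraded Fh \<longleftrightarrow>
     (\<forall>h hb. csubspace (Fh h hb)) \<and>
     (\<forall>v. \<exists>!comp :: real \<times> real \<Rightarrow> 'v.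
           finite {k. comp k \<noteq> 0} \<and> (\<forall>k. comp k \<in> Fh (fst k) (snd k)) \<and>
           v = (\<Sum>k\<in>{k. comp k \<noteq> 0}. comp k))"

definition par :: "real \<Rightarrow> real \<Rightarrow> nat" where
  "par h hb = nat (\<lfloor>2 * (h - hb)\<rfloor> mod 2)"

text \<open>z^r zbar^s for r - s integral: |z|^(2s) z^(r-s)\<close>
definition zz :: "complex \<Rightarrow> real \<Rightarrow> real \<Rightarrow> complex" where
  "zz z r s = complex_of_real (cmod z powr (2 * s)) * z powi \<lfloor>r - s\<rfloor>"

definition real_analytic2 :: "(complex \<times> complex \<Rightarrow> complex) \<Rightarrow> (complex \<times> complex) set \<Rightarrow> bool" where
  "real_analytic2 f U \<longleftrightarrow>
     (\<forall>p\<in>U. \<exists>e>0. \<exists>c :: nat \<times> nat \<times> nat \<times> nat \<Rightarrow> complex.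
        \<forall>z1 z2. cmod (z1 - fst p) < e \<and> cmod (z2 - snd p) < e \<longrightarrow>
          (let t = (\<lambda>(n1, m1, n2, m2). c (n1, m1, n2, m2) * (z1 - fst p) ^ n1 * cnj (z1 - fst p) ^ m1
                        * (z2 - snd p) ^ n2 * cnj (z2 - snd p) ^ m2)
           in t summable_on UNIV \<and> f (z1, z2) = infsum t UNIV))"

definition restricted_dual :: "(real \<Rightarrow> real \<Rightarrow> 'v::cvs set) \<Rightarrow> ('v \<Rightarrow> complex) set" where
  "restricted_dual Fh = {u. (\<forall>x y. u (x + y) = u x + u y) \<and> (\<forall>a x. u (a *\<^sub>C x) = a * u x) \<and>
      (\<exists>S. finite S \<and> (\<forall>h hb x. (h, hb) \<notin> S \<and> x \<in> Fh h hb \<longrightarrow> u x = 0))}"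

text \<open>md a r s b = a(r,s) b, the modes of the full vertex operator Y(a,z) =
  sum a(r,s) z^(-r-1) zbar^(-s-1).\<close>

definition full_VOSA ::
  "(real \<Rightarrow> real \<Rightarrow> 'v::cvs set) \<Rightarrow> ('v \<Rightarrow> real \<Rightarrow> real \<Rightarrow> 'v \<Rightarrow> 'v) \<Rightarrow> 'v \<Rightarrow> bool" where
  "full_VOSA Fh md vac \<longleftrightarrow>
     bigraded Fh \<and>
     Fh 0 0 = {a *\<^sub>C vac | a. True} \<and>
     (\<forall>h hb. Fh h hb \<noteq> {0} \<longrightarrow> 2 * (h - hb) \<in> \<int>) \<and>
     (\<forall>K. finite {(h, hb). h + hb < K \<and> Fh h hb \<noteq> {0}}) \<and>
     (\<forall>h hb. cfin_dim (Fh h hb)) \<and>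
     (\<exists>N. \<forall>h hb. Fh h hb \<noteq> {0} \<longrightarrow> N \<le> h \<and> N \<le> hb) \<and>
     \<comment> \<open>bilinearity of modes\<close>
     (\<forall>r s b. clin (\<lambda>a. md a r s b)) \<and> (\<forall>a r s. clin (md a r s)) \<and>
     \<comment> \<open>compatibility with the bigrading, and evenness of Y\<close>
     (\<forall>h hb h' hb' a b r s. a \<in> Fh h hb \<and> b \<in> Fh h' hb' \<longrightarrow>
          md a r s b \<in> Fh (h + h' - r - 1) (hb + hb' - s - 1) \<and>
          (r - s \<notin> \<int> \<longrightarrow> md a r s b = 0)) \<and>
     \<comment> \<open>vacuum axioms\<close>
     (\<forall>r s b. md vac r s b = (if r = -1 \<and> s = -1 then b else 0)) \<and>
     (\<forall>a r s. \<not> (r \<in> \<int> \<and> s \<in> \<int> \<and> r < 0 \<and> s < 0) \<longrightarrow> md a r s vac = 0) \<and>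
     (\<forall>a. md a (-1) (-1) vac = a) \<and>
     \<comment> \<open>convergence and equality of the three matrix coefficients\<close>
     (\<forall>h hb h' hb' a b c u. a \<in> Fh h hb \<and> b \<in> Fh h' hb' \<and> u \<in> restricted_dual Fh \<longrightarrow>
        (\<exists>f. real_analytic2 f {(z1, z2). z1 \<noteq> 0 \<and> z2 \<noteq> 0 \<and> z1 \<noteq> z2} \<and>
          (\<forall>z1 z2. cmod z1 > cmod z2 \<and> cmod z2 > 0 \<longrightarrow>
             (let t = (\<lambda>(r, s, r', s'). u (md a r s (md b r' s' c))
                          * zz z1 (-r-1) (-s-1) * zz z2 (-r'-1) (-s'-1))
              in t summable_on UNIV \<and> f (z1, z2) = infsum t UNIV)) \<and>
          (\<forall>z1 z2. cmod z2 > cmod (z1 - z2) \<and> cmod (z1 - z2) > 0 \<longrightarrow>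
             (let t = (\<lambda>(r, s, r', s'). u (md (md a r s b) r' s' c)
                          * zz (z1 - z2) (-r-1) (-s-1) * zz z2 (-r'-1) (-s'-1))
              in t summable_on UNIV \<and> f (z1, z2) = infsum t UNIV)) \<and>
          (\<forall>z1 z2. cmod z2 > cmod z1 \<and> cmod z1 > 0 \<longrightarrow>
             (let t = (\<lambda>(r, s, r', s'). (-1) ^ (par h hb * par h' hb') * u (md b r' s' (md a r s c))
                          * zz z1 (-r-1) (-s-1) * zz z2 (-r'-1) (-s'-1))
              in t summable_on UNIV \<and> f (z1, z2) = infsum t UNIV))))"

definition opcomm :: "('v::cvs \<Rightarrow> 'v) \<Rightarrow> ('v \<Rightarrow> 'v) \<Rightarrow> 'v \<Rightarrow> 'v" where
  "opcomm A B = (\<lambda>x. A (B x) - B (A x))"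

definition opacomm :: "('v::cvs \<Rightarrow> 'v) \<Rightarrow> ('v \<Rightarrow> 'v) \<Rightarrow> 'v \<Rightarrow> 'v" where
  "opacomm A B = (\<lambda>x. A (B x) + B (A x))"

definition half_int :: "real \<Rightarrow> bool" where
  "half_int r \<longleftrightarrow> r - 1/2 \<in> \<int>"

text \<open>N=2 Neveu-Schwarz relations for modes L n, J n, Gp r, Gm r with central charge c
  (integer indices m, n and half-odd-integer indices r, s are given as reals).\<close>
definition N2_NS :: "complex \<Rightarrow> (real \<Rightarrow> 'v::cvs \<Rightarrow> 'v) \<Rightarrow> (real \<Rightarrow> 'v \<Rightarrow> 'v) \<Rightarrow>
     (real \<Rightarrow> 'v \<Rightarrow> 'v) \<Rightarrow> (real \<Rightarrow> 'v \<Rightarrow> 'v) \<Rightarrow> bool" where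
  "N2_NS c L J Gp Gm \<longleftrightarrow>
     (\<forall>m\<in>\<int>. \<forall>n\<in>\<int>. opcomm (J m) (J n) =
         (\<lambda>x. (if m + n = 0 then c / 3 * complex_of_real m else 0) *\<^sub>C x)) \<and>
     (\<forall>m\<in>\<int>. \<forall>r. half_int r \<longrightarrow>
         opcomm (J m) (Gp r) = Gp (m + r) \<and> opcomm (J m) (Gm r) = (\<lambda>x. - Gm (m + r) x)) \<and>
     (\<forall>m\<in>\<int>. \<forall>r. half_int r \<longrightarrow>
         opcomm (L m) (Gp r) = (\<lambda>x. complex_of_real (m/2 - r) *\<^sub>C Gp (m + r) x) \<and>
         opcomm (L m) (Gm r) = (\<lambda>x. complex_of_real (m/2 - r) *\<^sub>C Gm (m + r) x)) \<and>
     (\<forall>m\<in>\<int>. \<forall>n\<in>\<int>. opcomm (L m) (J n) = (\<lambda>x. complex_of_real (- n) *\<^sub>C J (m + n) x)) \<and>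
     (\<forall>r s. half_int r \<and> half_int s \<longrightarrow>
         opacomm (Gp r) (Gp s) = (\<lambda>x. 0) \<and> opacomm (Gm r) (Gm s) = (\<lambda>x. 0) \<and>
         opacomm (Gp r) (Gm s) = (\<lambda>x. L (r + s) x + complex_of_real ((r - s) / 2) *\<^sub>C J (r + s) x
            + ((if r + s = 0 then c / 6 * complex_of_real (r\<^sup>2 - 1/4) else 0) *\<^sub>C x)))"

definition virasoro :: "complex \<Rightarrow> (real \<Rightarrow> 'v::cvs \<Rightarrow> 'v) \<Rightarrow> bool" where
  "virasoro c L \<longleftrightarrow> (\<forall>m\<in>\<int>. \<forall>n\<in>\<int>. opcomm (L m) (L n) =
      (\<lambda>x. complex_of_real (m - n) *\<^sub>C L (m + n) x
         + (if m + n = 0 then c / 12 * complex_of_real (m ^ 3 - m) else 0) *\<^sub>C x))"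

definition Fpq :: "(real \<Rightarrow> real \<Rightarrow> 'v::cvs set) \<Rightarrow> (real \<Rightarrow> 'v \<Rightarrow> 'v) \<Rightarrow> (real \<Rightarrow> 'v \<Rightarrow> 'v)
      \<Rightarrow> real \<Rightarrow> real \<Rightarrow> real \<Rightarrow> real \<Rightarrow> 'v set" where
  "Fpq Fh J Jb p q h hb = {v \<in> Fh h hb. J 0 v = complex_of_real p *\<^sub>C v \<and> Jb 0 v = complex_of_real q *\<^sub>C v}"

definition semisimple_real :: "('v::cvs \<Rightarrow> 'v) \<Rightarrow> bool" where
  "semisimple_real A \<longleftrightarrow> (\<forall>v. \<exists>P :: real set. \<exists>w. finite P \<and>
      (\<forall>p\<in>P. A (w p) = complex_of_real p *\<^sub>C w p) \<and> v = (\<Sum>p\<in>P. w p))"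

text \<open>Modes:
  L(n) = omega(n+1,-1), Lbar(n) = omegabar(-1,n+1), G^pm_r = tau^pm(r+1/2,-1), J_n = J(n,-1),
  Gbar^pm_r = taubar^pm(-1,r+1/2), Jbar_n = Jbar(-1,n).\<close>
definition N22_FVOSA ::
  "(real \<Rightarrow> real \<Rightarrow> 'v::cvs set) \<Rightarrow> ('v \<Rightarrow> real \<Rightarrow> real \<Rightarrow> 'v \<Rightarrow> 'v) \<Rightarrow> 'v \<Rightarrow>
   'v \<Rightarrow> 'v \<Rightarrow> complex \<Rightarrow> complex \<Rightarrow> 'v \<Rightarrow> 'v \<Rightarrow> 'v \<Rightarrow> 'v \<Rightarrow> 'v \<Rightarrow> 'v \<Rightarrow> bool" where
  "N22_FVOSA Fh md vac \<omega> \<omega>b c cb \<tau>p \<tau>m j \<tau>bp \<tau>bm jb \<longleftrightarrow>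
     (let L = (\<lambda>n. md \<omega> (n + 1) (-1)); Lb = (\<lambda>n. md \<omega>b (-1) (n + 1));
          Gp = (\<lambda>r. md \<tau>p (r + 1/2) (-1)); Gm = (\<lambda>r. md \<tau>m (r + 1/2) (-1));
          J = (\<lambda>n. md j n (-1));
          Gbp = (\<lambda>r. md \<tau>bp (-1) (r + 1/2)); Gbm = (\<lambda>r. md \<tau>bm (-1) (r + 1/2));
          Jb = (\<lambda>n. md jb (-1) n)
      in full_VOSA Fh md vac \<and>
         \<comment> \<open>conformal vectors\<close>
         \<omega> \<in> Fh 2 0 \<and> \<omega>b \<in> Fh 0 2 \<and>
         virasoro c L \<and> virasoro cb Lb \<and>
         (\<forall>m\<in>\<int>. \<forall>n\<in>\<int>. opcomm (L m) (Lb n) = (\<lambda>x. 0)) \<and>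
         (\<forall>h hb v. v \<in> Fh h hb \<longrightarrow> L 0 v = complex_of_real h *\<^sub>C v \<and> Lb 0 v = complex_of_real hb *\<^sub>C v) \<and>
         \<comment> \<open>holomorphic / antiholomorphic generators\<close>
         \<tau>p \<in> Fh (3/2) 0 \<and> \<tau>m \<in> Fh (3/2) 0 \<and> j \<in> Fh 1 0 \<and>
         \<tau>bp \<in> Fh 0 (3/2) \<and> \<tau>bm \<in> Fh 0 (3/2) \<and> jb \<in> Fh 0 1 \<and>
         (\<forall>a\<in>{\<tau>p, \<tau>m, j}. \<forall>r s. s \<noteq> -1 \<longrightarrow> md a r s = (\<lambda>x. 0)) \<and>
         (\<forall>a\<in>{\<tau>bp, \<tau>bm, jb}. \<forall>r s. r \<noteq> -1 \<longrightarrow> md a r s = (\<lambda>x. 0)) \<and>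
         \<comment> \<open>two N=2 NS algebras\<close>
         N2_NS c L J Gp Gm \<and> N2_NS cb Lb Jb Gbp Gbm \<and>
         \<comment> \<open>they supercommute\<close>
         (\<forall>m\<in>\<int>. \<forall>n\<in>\<int>. opcomm (L m) (Jb n) = (\<lambda>x. 0) \<and> opcomm (J m) (Lb n) = (\<lambda>x. 0) \<and>
                          opcomm (J m) (Jb n) = (\<lambda>x. 0)) \<and>
         (\<forall>m\<in>\<int>. \<forall>r. half_int r \<longrightarrow>
            (\<forall>G\<in>{Gbp r, Gbm r}. opcomm (L m) G = (\<lambda>x. 0) \<and> opcomm (J m) G = (\<lambda>x. 0)) \<and>
            (\<forall>G\<in>{Gp r, Gm r}. opcomm G (Lb m) = (\<lambda>x. 0) \<and> opcomm G (Jb m) = (\<lambda>x. 0))) \<and>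
         (\<forall>r s. half_int r \<and> half_int s \<longrightarrow>
            (\<forall>G\<in>{Gp r, Gm r}. \<forall>H\<in>{Gbp s, Gbm s}. opacomm G H = (\<lambda>x. 0))) \<and>
         \<comment> \<open>J_0, Jbar_0 semisimple with real eigenvalues; J_0 - Jbar_0 integral and
             exp(pi i (J_0 - Jbar_0)) is the parity operator\<close>
         semisimple_real (J 0) \<and> semisimple_real (Jb 0) \<and>
         (\<forall>p q h hb v. v \<in> Fpq Fh J Jb p q h hb \<and> v \<noteq> 0 \<longrightarrow>
            p - q \<in> \<int> \<and> exp (complex_of_real (pi * (p - q)) * \<i>) = (-1) ^ par h hb))"

end

theory Submission
  imports Defs
begin

(* The two odd operators G-_{1/2} and Gbar-_{1/2} are contracting homotopies for
   d = G+_{-1/2} + Gbar+_{-1/2}: the N=2 relations and the supercommutation of the two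
   copies give [d, G-_{1/2}]_+ = L_0 - J_0/2 and [d, Gbar-_{1/2}]_+ = Lbar_0 - Jbar_0/2,
   and on the given v these act as the scalars r and s.  Hence d v = 0 forces
   d (G-_{1/2} v) = r v and d (Gbar-_{1/2} v) = s v, and whichever of r, s is nonzero
   exhibits v as a coboundary. *)

lemma cscale_zero_left [simp]: "0 *\<^sub>C (x::'a::cvs) = 0"
proof -
  have "0 *\<^sub>C x = 0 *\<^sub>C x + 0 *\<^sub>C x" by (metis add_0 cscale_add_left)
  then show ?thesis by simp
qed

lemma cscale_zero_right [simp]: "a *\<^sub>C (0::'a::cvs) = 0"
proof -
  have "a *\<^sub>C (0::'a) = a *\<^sub>C 0 + a *\<^sub>C 0" by (metis add_0 cscale_add_right)
  then show ?thesis by simp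
qed

lemma cscale_sum: "finite A \<Longrightarrow> a *\<^sub>C (\<Sum>x\<in>A. f x) = (\<Sum>x\<in>A. a *\<^sub>C (f x :: 'a::cvs))"
  by (induction A rule: finite_induct) (auto simp: cscale_add_right)

lemma clin_add: "clin f \<Longrightarrow> f (x + y) = f x + f y"
  unfolding clin_def by blast

lemma clin_cscale: "clin f \<Longrightarrow> f (a *\<^sub>C x) = a *\<^sub>C f x"
  unfolding clin_def by blast

lemma clin_zero: "clin f \<Longrightarrow> f 0 = 0"
  by (metis add_0 add_cancel_right_right clin_add)

lemma clin_sum:
  assumes "clin f"
  shows "finite A \<Longrightarrow> f (\<Sum>x\<in>A. g x) = (\<Sum>x\<in>A. f (g x))"
  by (induction A rule: finite_induct) (auto simp: clin_zero[OF assms] clin_add[OF assms])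

lemma clin_add_cscale:
  assumes "clin f" "clin g"
  shows "clin (\<lambda>x. f x + a *\<^sub>C g x)"
  unfolding clin_def
proof (intro conjI allI)
  fix x y
  show "f (x + y) + a *\<^sub>C g (x + y) = f x + a *\<^sub>C g x + (f y + a *\<^sub>C g y)"
    using assms by (simp add: clin_add cscale_add_right algebra_simps)
next
  fix b x
  show "f (b *\<^sub>C x) + a *\<^sub>C g (b *\<^sub>C x) = b *\<^sub>C (f x + a *\<^sub>C g x)"
    using assms by (simp add: clin_cscale cscale_cscale cscale_add_right mult.commute)
qed

lemma clin_eigen_sum:
  assumes "clin A" "finite I" "\<And>i. i \<in> I \<Longrightarrow> A (u i) = a *\<^sub>C u i"
  shows "A (\<Sum>i\<in>I. u i) = a *\<^sub>C (\<Sum>i\<in>I. u i)"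
  using assms by (simp add: clin_sum cscale_sum)

lemma clin_preimage_of_eigen:
  assumes "clin d" "d u = a *\<^sub>C v" "a \<noteq> 0"
  shows "d (inverse a *\<^sub>C u) = v"
  using assms by (simp add: clin_cscale cscale_cscale cscale_one)

lemma half_int_half: "half_int (-1/2)" "half_int (1/2)"
  unfolding half_int_def by simp_all

lemma N2_NS_anticomm:
  assumes "N2_NS c L J Gp Gm" "half_int r" "half_int s"
  shows "Gp r (Gm s x) + Gm s (Gp r x) = L (r + s) x + complex_of_real ((r - s) / 2) *\<^sub>C J (r + s) x
           + ((if r + s = 0 then c / 6 * complex_of_real (r\<^sup>2 - 1/4) else 0) *\<^sub>C x)"
  using assms unfolding N2_NS_def opacomm_def by (simp add: fun_eq_iff)

locale N22_full_vosa =
  fixes Fh :: "real \<Rightarrow> real \<Rightarrow> 'v::cvs set"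
    and md :: "'v \<Rightarrow> real \<Rightarrow> real \<Rightarrow> 'v \<Rightarrow> 'v"
    and vac \<omega> \<omega>b \<tau>p \<tau>m j \<tau>bp \<tau>bm jb :: 'v
    and c cb :: complex
  assumes N22: "N22_FVOSA Fh md vac \<omega> \<omega>b c cb \<tau>p \<tau>m j \<tau>bp \<tau>bm jb"
begin

(* Gp_mhalf = G+_{-1/2}, Gm_half = G-_{1/2}, and likewise for the barred modes. *)
abbreviation "L0 \<equiv> md \<omega> 1 (-1)"
abbreviation "Lb0 \<equiv> md \<omega>b (-1) 1"
abbreviation "J0 \<equiv> md j 0 (-1)"
abbreviation "Jb0 \<equiv> md jb (-1) 0"
abbreviation "Gp_mhalf \<equiv> md \<tau>p 0 (-1)"
abbreviation "Gm_half \<equiv> md \<tau>m 1 (-1)"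
abbreviation "Gbp_mhalf \<equiv> md \<tau>bp (-1) 0"
abbreviation "Gbm_half \<equiv> md \<tau>bm (-1) 1"
abbreviation "d x \<equiv> Gp_mhalf x + Gbp_mhalf x"

lemma full_VOSA: "full_VOSA Fh md vac"
  using N22 unfolding N22_FVOSA_def Let_def by (elim conjE)

lemma clin_modes: "clin (md a r s)"
proof -
  have "\<forall>a r s. clin (md a r s)"
    using full_VOSA unfolding full_VOSA_def by (elim conjE)
  then show ?thesis by blast
qed

lemma N2_NS_holomorphic:
  "N2_NS c (\<lambda>n. md \<omega> (n + 1) (-1)) (\<lambda>n. md j n (-1))
     (\<lambda>r. md \<tau>p (r + 1/2) (-1)) (\<lambda>r. md \<tau>m (r + 1/2) (-1))"
  using N22 unfolding N22_FVOSA_def Let_def by (elim conjE)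

lemma N2_NS_antiholomorphic:
  "N2_NS cb (\<lambda>n. md \<omega>b (-1) (n + 1)) (\<lambda>n. md jb (-1) n)
     (\<lambda>r. md \<tau>bp (-1) (r + 1/2)) (\<lambda>r. md \<tau>bm (-1) (r + 1/2))"
  using N22 unfolding N22_FVOSA_def Let_def by (elim conjE)

lemma L0_Lb0_grading:
  assumes "x \<in> Fh h hb"
  shows "L0 x = complex_of_real h *\<^sub>C x" and "Lb0 x = complex_of_real hb *\<^sub>C x"
proof -
  have "\<forall>h hb x. x \<in> Fh h hb \<longrightarrow> md \<omega> (0 + 1) (-1) x = complex_of_real h *\<^sub>C x
          \<and> md \<omega>b (-1) (0 + 1) x = complex_of_real hb *\<^sub>C x"
    using N22 unfolding N22_FVOSA_def Let_def by (elim conjE)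
  then show "L0 x = complex_of_real h *\<^sub>C x" and "Lb0 x = complex_of_real hb *\<^sub>C x"
    using assms by simp_all
qed

lemma holomorphic_antiholomorphic_G_anticommute:
  assumes "half_int r" "half_int s"
    and "G \<in> {md \<tau>p (r + 1/2) (-1), md \<tau>m (r + 1/2) (-1)}"
    and "H \<in> {md \<tau>bp (-1) (s + 1/2), md \<tau>bm (-1) (s + 1/2)}"
  shows "G (H x) + H (G x) = 0"
proof -
  have "\<forall>r s. half_int r \<and> half_int s \<longrightarrow>
          (\<forall>G\<in>{md \<tau>p (r + 1/2) (-1), md \<tau>m (r + 1/2) (-1)}.
           \<forall>H\<in>{md \<tau>bp (-1) (s + 1/2), md \<tau>bm (-1) (s + 1/2)}. opacomm G H = (\<lambda>x. 0))"
    using N22 unfolding N22_FVOSA_def Let_def by (elim conjE)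
  with assms have "opacomm G H = (\<lambda>x. 0)" by blast
  then show ?thesis by (simp add: opacomm_def fun_eq_iff)
qed

lemma anticomm_d_Gm_half:
  "d (Gm_half x) + Gm_half (d x) = L0 x + complex_of_real (-1/2) *\<^sub>C J0 x"
proof -
  have holo: "Gp_mhalf (Gm_half x) + Gm_half (Gp_mhalf x) = L0 x + complex_of_real (-1/2) *\<^sub>C J0 x"
    using N2_NS_anticomm[OF N2_NS_holomorphic half_int_half] by (simp add: power2_eq_square)
  have mixed: "Gm_half (Gbp_mhalf x) + Gbp_mhalf (Gm_half x) = 0"
    using holomorphic_antiholomorphic_G_anticommute[OF half_int_half(2,1)] by simp
  show ?thesis
    using holo mixed by (simp add: clin_add[OF clin_modes] algebra_simps)
qed

lemma anticomm_d_Gbm_half: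
  "d (Gbm_half x) + Gbm_half (d x) = Lb0 x + complex_of_real (-1/2) *\<^sub>C Jb0 x"
proof -
  have antiholo: "Gbp_mhalf (Gbm_half x) + Gbm_half (Gbp_mhalf x) = Lb0 x + complex_of_real (-1/2) *\<^sub>C Jb0 x"
    using N2_NS_anticomm[OF N2_NS_antiholomorphic half_int_half] by (simp add: power2_eq_square)
  have mixed: "Gp_mhalf (Gbm_half x) + Gbm_half (Gp_mhalf x) = 0"
    using holomorphic_antiholomorphic_G_anticommute[OF half_int_half(1,2)] by simp
  show ?thesis
    using antiholo mixed by (simp add: clin_add[OF clin_modes] algebra_simps)
qed

lemma d_Gm_half_of_closed:
  "d x = 0 \<Longrightarrow> d (Gm_half x) = L0 x + complex_of_real (-1/2) *\<^sub>C J0 x"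
  using anticomm_d_Gm_half[of x] by (simp add: clin_zero[OF clin_modes])

lemma d_Gbm_half_of_closed:
  "d x = 0 \<Longrightarrow> d (Gbm_half x) = Lb0 x + complex_of_real (-1/2) *\<^sub>C Jb0 x"
  using anticomm_d_Gbm_half[of x] by (simp add: clin_zero[OF clin_modes])

lemma eigen_on_Fpq:
  assumes "x \<in> Fpq Fh (\<lambda>n. md j n (-1)) (\<lambda>n. md jb (-1) n) p q (r + p/2) (s + q/2)"
  shows "L0 x + complex_of_real (-1/2) *\<^sub>C J0 x = complex_of_real r *\<^sub>C x"
    and "Lb0 x + complex_of_real (-1/2) *\<^sub>C Jb0 x = complex_of_real s *\<^sub>C x"
proof -
  have x: "x \<in> Fh (r + p/2) (s + q/2)"
    and J: "J0 x = complex_of_real p *\<^sub>C x" "Jb0 x = complex_of_real q *\<^sub>C x"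
    using assms unfolding Fpq_def by auto
  have "L0 x + complex_of_real (-1/2) *\<^sub>C J0 x
      = (complex_of_real (r + p/2) + complex_of_real (-1/2) * complex_of_real p) *\<^sub>C x"
    by (simp only: L0_Lb0_grading(1)[OF x] J cscale_add_left cscale_cscale)
  then show "L0 x + complex_of_real (-1/2) *\<^sub>C J0 x = complex_of_real r *\<^sub>C x"
    by simp
  have "Lb0 x + complex_of_real (-1/2) *\<^sub>C Jb0 x
      = (complex_of_real (s + q/2) + complex_of_real (-1/2) * complex_of_real q) *\<^sub>C x"
    by (simp only: L0_Lb0_grading(2)[OF x] J cscale_add_left cscale_cscale)
  then show "Lb0 x + complex_of_real (-1/2) *\<^sub>C Jb0 x = complex_of_real s *\<^sub>C x"
    by simp
qed

lemma eigen_on_sum_Fpq: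
  assumes "finite P"
    and "\<forall>pq\<in>P. vc pq \<in> Fpq Fh (\<lambda>n. md j n (-1)) (\<lambda>n. md jb (-1) n)
                          (fst pq) (snd pq) (r + fst pq / 2) (s + snd pq / 2)"
  shows "L0 (\<Sum>pq\<in>P. vc pq) + complex_of_real (-1/2) *\<^sub>C J0 (\<Sum>pq\<in>P. vc pq)
           = complex_of_real r *\<^sub>C (\<Sum>pq\<in>P. vc pq)"
    and "Lb0 (\<Sum>pq\<in>P. vc pq) + complex_of_real (-1/2) *\<^sub>C Jb0 (\<Sum>pq\<in>P. vc pq)
           = complex_of_real s *\<^sub>C (\<Sum>pq\<in>P. vc pq)"
proof -
  let ?A = "\<lambda>x. L0 x + complex_of_real (-1/2) *\<^sub>C J0 x"
  let ?Ab = "\<lambda>x. Lb0 x + complex_of_real (-1/2) *\<^sub>C Jb0 x"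
  show "?A (\<Sum>pq\<in>P. vc pq) = complex_of_real r *\<^sub>C (\<Sum>pq\<in>P. vc pq)"
    by (rule clin_eigen_sum[where A = ?A, OF clin_add_cscale[OF clin_modes clin_modes] assms(1)])
      (use assms(2) eigen_on_Fpq(1) in auto)
  show "?Ab (\<Sum>pq\<in>P. vc pq) = complex_of_real s *\<^sub>C (\<Sum>pq\<in>P. vc pq)"
    by (rule clin_eigen_sum[where A = ?Ab, OF clin_add_cscale[OF clin_modes clin_modes] assms(1)])
      (use assms(2) eigen_on_Fpq(2) in auto)
qed

end

theorem lemma2p7:
  fixes Fh :: "real \<Rightarrow> real \<Rightarrow> 'v::cvs set"
    and md :: "'v \<Rightarrow> real \<Rightarrow> real \<Rightarrow> 'v \<Rightarrow> 'v"
    and vac \<omega> \<omega>b \<tau>p \<tau>m j \<tau>bp \<tau>bm jb :: 'v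
    and c cb :: complex
    and r s :: real
    and P :: "(real \<times> real) set"
    and vc :: "real \<times> real \<Rightarrow> 'v"
    and v :: 'v
  assumes F: "N22_FVOSA Fh md vac \<omega> \<omega>b c cb \<tau>p \<tau>m j \<tau>bp \<tau>bm jb"
    and c_nz: "c \<noteq> 0" and cb_nz: "cb \<noteq> 0"
    and P_fin: "finite P"
    and comps: "\<forall>pq\<in>P. vc pq \<in> Fpq Fh (\<lambda>n. md j n (-1)) (\<lambda>n. md jb (-1) n)
                          (fst pq) (snd pq) (r + fst pq / 2) (s + snd pq / 2)"
    and v_def: "v = (\<Sum>pq\<in>P. vc pq)"
    and v_nz: "v \<noteq> 0"
    and closed: "md \<tau>p 0 (-1) v + md \<tau>bp (-1) 0 v = 0"
    and rs: "(r, s) \<noteq> (0, 0)"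
  shows "\<exists>w. md \<tau>p 0 (-1) w + md \<tau>bp (-1) 0 w = v"
proof -
  interpret N22_full_vosa Fh md vac \<omega> \<omega>b \<tau>p \<tau>m j \<tau>bp \<tau>bm jb c cb
    using F by unfold_locales
  have clin_d: "clin (\<lambda>x. d x)"
    using clin_add_cscale[OF clin_modes clin_modes, where a = 1] by (simp add: cscale_one)
  have "d (Gm_half v) = complex_of_real r *\<^sub>C v"
    using d_Gm_half_of_closed[OF closed] eigen_on_sum_Fpq(1)[OF P_fin comps] v_def by simp
  moreover have "d (Gbm_half v) = complex_of_real s *\<^sub>C v"
    using d_Gbm_half_of_closed[OF closed] eigen_on_sum_Fpq(2)[OF P_fin comps] v_def by simp
  moreover have "complex_of_real r \<noteq> 0 \<or> complex_of_real s \<noteq> 0"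
    using rs by simp
  ultimately show ?thesis
    using clin_preimage_of_eigen[OF clin_d] by blast
qed

end
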